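(* Let $r_2$ be an admissible trajectory and $\tau,T,e=(e_1,e_2,e_3),u,z$ the fundamental fields on $G$. Then on $G$ $$\frac{\partial(\tau,T,e_1,e_2)}{\partial(t,x_1,x_2,x_3)}=z\,u^2\,e_3,$$ where $x_1,x_2,x_3$ are the coordinates of $r_1$. In particular this Jacobian is nonzero wherever $e_3\neq0$; analogous statements hold with $(e_1,e_2)$ replaced by any two of the three components of $e$.
   Context: Units with $c=1$. A function $r_2:\mathbb R\to\mathbb R^3$ is an admissible trajectory if it has continuous derivatives up to order 3, $|\dot r_2(t)|<1$ for all $t$, and for every $t_1$ one has $\sup_{u\le t_1}|\dot r_2(u)|<1$ and $\sup_{u\le t_1}|\ddot r_2(u)|<\infty$. The retarded time $\tau(r_1,t)$ is the unique $\tau\le t$ with $\tau=t-|r_1-r_2(\tau)|$; $T=t-\tau$; $G=\{(r_1,t):T(r_1,t)>0\}$; on $G$: $u=1/T$, $e=u(r_1-r_2(\tau))$, $v=\dot r_2\circ\tau$, $z=(1-\langle e,v\rangle)^{-1}$. *)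

theory Defs
  imports "HOL-Analysis.Analysis"
begin

text \<open>Units with c = 1. Trajectories r2 : R -> R^3.\<close>

definition admissible :: "(real \<Rightarrow> real^3) \<Rightarrow> bool" where
  "admissible r2 \<longleftrightarrow>
     (\<exists>v a j.
        (\<forall>t. (r2 has_vector_derivative v t) (at t)) \<and>
        (\<forall>t. (v has_vector_derivative a t) (at t)) \<and>
        (\<forall>t. (a has_vector_derivative j t) (at t)) \<and>
        continuous_on UNIV j \<and>
        (\<forall>t. norm (v t) < 1) \<and>
        (\<forall>t1. (\<exists>M<1. \<forall>s\<le>t1. norm (v s) \<le> M)) \<and>
        (\<forall>t1. (\<exists>B. \<forall>s\<le>t1. norm (a s) \<le> B)))"

definition ret_time :: "(real \<Rightarrow> real^3) \<Rightarrow> real^3 \<Rightarrow> real \<Rightarrow> real" where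
  "ret_time r2 r1 t = (THE \<tau>. \<tau> \<le> t \<and> \<tau> = t - norm (r1 - r2 \<tau>))"

definition retT :: "(real \<Rightarrow> real^3) \<Rightarrow> real^3 \<Rightarrow> real \<Rightarrow> real" where
  "retT r2 r1 t = t - ret_time r2 r1 t"

definition regionG :: "(real \<Rightarrow> real^3) \<Rightarrow> ((real^3) \<times> real) set" where
  "regionG r2 = {(r1, t). retT r2 r1 t > 0}"

definition field_u :: "(real \<Rightarrow> real^3) \<Rightarrow> real^3 \<Rightarrow> real \<Rightarrow> real" where
  "field_u r2 r1 t = 1 / retT r2 r1 t"

definition field_e :: "(real \<Rightarrow> real^3) \<Rightarrow> real^3 \<Rightarrow> real \<Rightarrow> real^3" where
  "field_e r2 r1 t = field_u r2 r1 t *\<^sub>R (r1 - r2 (ret_time r2 r1 t))"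

definition field_v :: "(real \<Rightarrow> real^3) \<Rightarrow> real^3 \<Rightarrow> real \<Rightarrow> real^3" where
  "field_v r2 r1 t = vector_derivative r2 (at (ret_time r2 r1 t))"

definition field_z :: "(real \<Rightarrow> real^3) \<Rightarrow> real^3 \<Rightarrow> real \<Rightarrow> real" where
  "field_z r2 r1 t = 1 / (1 - field_e r2 r1 t \<bullet> field_v r2 r1 t)"

text \<open>Coordinates of a point of R^4, ordered (t, x1, x2, x3).\<close>
definition vec4 :: "real \<Rightarrow> real \<Rightarrow> real \<Rightarrow> real \<Rightarrow> real^4" where
  "vec4 a b c d = (\<chi> i. if i = 1 then a else if i = 2 then b else if i = 3 then c else d)"

definition space_part :: "real^4 \<Rightarrow> real^3" where
  "space_part p = (\<chi> i. if i = 1 then p$2 else if i = 2 then p$3 else p$4)"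

definition time_part :: "real^4 \<Rightarrow> real" where
  "time_part p = p$1"

definition PhiMap :: "(real \<Rightarrow> real^3) \<Rightarrow> real^4 \<Rightarrow> real^4" where
  "PhiMap r2 p = (let r1 = space_part p; t = time_part p in
     vec4 (ret_time r2 r1 t) (retT r2 r1 t) (field_e r2 r1 t $ 1) (field_e r2 r1 t $ 2))"

end

theory Submission
  imports Defs
begin

(* For an admissible trajectory the speed is bounded by some M < 1 on every
       past half-line, so r2 is M-Lipschitz there; hence the light-cone equation
       tau = t - |x - r2 tau| has exactly one solution tau <= t (uniqueness by the Lipschitz
       bound, existence by the intermediate value theorem).  On G the map (x, t) |-> tau(x, t) is the second component of the inverse of
       K (x, tau) = (x, tau + |x - r2 tau|); the inverse function theorem gives
       d tau = z (dt - e . dx), and then dT = dt - d tau and de = u (dx - d tau v - dT e).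
   (3) Algebra.  Expanding the 4 x 4 determinant of the resulting linear map shows that it
       equals z u^2 e3 for arbitrary parameters z, u, e, v. *)

lemma subluminal_lipschitz:
  fixes r2 :: "real \<Rightarrow> 'a::real_normed_vector"
  assumes der: "\<And>s. (r2 has_vector_derivative v s) (at s)"
    and bound: "\<And>s. s \<le> t1 \<Longrightarrow> norm (v s) \<le> M"
    and "a \<le> t1" "b \<le> t1"
  shows "norm (r2 b - r2 a) \<le> M * \<bar>b - a\<bar>"
proof -
  have "norm (r2 b - r2 a) \<le> M * norm (b - a)"
  proof (rule differentiable_bound[of "{..t1}" r2 "\<lambda>s h. h *\<^sub>R v s"])
    show "(r2 has_derivative (\<lambda>h. h *\<^sub>R v s)) (at s within {..t1})" for s
      using der[of s] by (simp add: has_vector_derivative_def has_derivative_at_withinI)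
    show "onorm (\<lambda>h. h *\<^sub>R v s) \<le> M" if "s \<in> {..t1}" for s
      using onorm_scaleR_left[OF bounded_linear_ident, of "v s"] bound[of s] that
      by (simp add: onorm_id)
  qed (use assms in auto)
  then show ?thesis by simp
qed

(* With a speed bound M < 1 the past light cone of (x, t) meets the trajectory at most once:
   two solutions would give a chord of speed 1. *)
lemma light_cone_unique:
  fixes r2 :: "real \<Rightarrow> 'a::real_normed_vector"
  assumes der: "\<And>s. (r2 has_vector_derivative v s) (at s)"
    and bound: "\<And>s. s \<le> t \<Longrightarrow> norm (v s) \<le> M" and "M < 1"
    and p: "p \<le> t" "p = t - norm (x - r2 p)"
    and q: "q \<le> t" "q = t - norm (x - r2 q)"
  shows "p = q"
proof -
  have no_earlier: "False"
    if "a \<le> t" "a = t - norm (x - r2 a)" "b \<le> t" "b = t - norm (x - r2 b)" "a < b" for a b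
  proof -
    have "b - a = norm (x - r2 a) - norm (x - r2 b)" using that by linarith
    also have "\<dots> \<le> norm (r2 b - r2 a)"
      using norm_triangle_ineq2[of "x - r2 a" "x - r2 b"] by simp
    also have "\<dots> \<le> M * (b - a)"
      using subluminal_lipschitz[OF der bound, where a=a and b=b] that by simp
    finally show False using that \<open>M < 1\<close>
      by (metis diff_gt_0_iff_gt linorder_not_le mult_less_cancel_right2)
  qed
  show ?thesis
    using no_earlier[OF p q] no_earlier[OF q p] by (cases p q rule: linorder_cases) auto
qed

(* ... and at least once: tau - t + |x - r2 tau| changes sign on [t - d, t] with
   d = |x - r2 t| / (1 - M) (intermediate value theorem). *)
lemma light_cone_exists:
  fixes r2 :: "real \<Rightarrow> 'a::real_normed_vector"
  assumes der: "\<And>s. (r2 has_vector_derivative v s) (at s)"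
    and bound: "\<And>s. s \<le> t \<Longrightarrow> norm (v s) \<le> M" and "M < 1"
  shows "\<exists>\<tau>. \<tau> \<le> t \<and> \<tau> = t - norm (x - r2 \<tau>)"
proof -
  define h where "h = (\<lambda>s. s + norm (x - r2 s) - t)"
  define d where "d = norm (x - r2 t) / (1 - M)"
  have "d \<ge> 0" using \<open>M < 1\<close> by (simp add: d_def)
  have "isCont h s" for s
    using has_vector_derivative_continuous[OF der[of s]] unfolding h_def
    by (intro continuous_intros)
  moreover have "h (t - d) \<le> 0"
  proof -
    have "norm (x - r2 (t - d)) \<le> norm (x - r2 t) + norm (r2 t - r2 (t - d))"
      using norm_triangle_ineq[of "x - r2 t" "r2 t - r2 (t - d)"] by simp
    also have "norm (r2 t - r2 (t - d)) \<le> M * d"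
      using subluminal_lipschitz[OF der bound, where a="t - d" and b=t] \<open>d \<ge> 0\<close> by simp
    also have "norm (x - r2 t) = (1 - M) * d" using \<open>M < 1\<close> by (simp add: d_def)
    finally show ?thesis unfolding h_def by (simp add: algebra_simps)
  qed
  moreover have "0 \<le> h t" by (simp add: h_def)
  ultimately obtain s where "s \<le> t" "h s = 0"
    using IVT[of h "t - d" 0 t] \<open>d \<ge> 0\<close> by auto
  then show ?thesis by (auto simp: h_def)
qed

lemma admissible_velocity:
  assumes "admissible r2"
  shows "(r2 has_vector_derivative vector_derivative r2 (at s)) (at s)"
    and "norm (vector_derivative r2 (at s)) < 1"
    and "\<exists>M<1. \<forall>s\<le>t. norm (vector_derivative r2 (at s)) \<le> M"
proof -
  obtain v where der: "\<And>s. (r2 has_vector_derivative v s) (at s)"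
    and "\<And>s. norm (v s) < 1" and "\<And>t. \<exists>M<1. \<forall>s\<le>t. norm (v s) \<le> M"
    using assms unfolding admissible_def by blast
  moreover have "vector_derivative r2 (at s) = v s" for s
    using vector_derivative_at[OF der] .
  ultimately show "(r2 has_vector_derivative vector_derivative r2 (at s)) (at s)"
    and "norm (vector_derivative r2 (at s)) < 1"
    and "\<exists>M<1. \<forall>s\<le>t. norm (vector_derivative r2 (at s)) \<le> M"
    by auto
qed

lemma ret_time_iff:
  assumes "admissible r2"
  shows "ret_time r2 x t = \<tau> \<longleftrightarrow> \<tau> \<le> t \<and> \<tau> = t - norm (x - r2 \<tau>)"
proof -
  obtain M where "M < 1" and bound: "\<And>s. s \<le> t \<Longrightarrow> norm (vector_derivative r2 (at s)) \<le> M"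
    using admissible_velocity(3)[OF assms, of t] by blast
  note der = admissible_velocity(1)[OF assms]
  have unique: "\<exists>!\<tau>. \<tau> \<le> t \<and> \<tau> = t - norm (x - r2 \<tau>)"
    using light_cone_exists[OF der bound \<open>M < 1\<close>] light_cone_unique[OF der bound \<open>M < 1\<close>]
    by blast
  show ?thesis
  proof
    show "\<tau> \<le> t \<and> \<tau> = t - norm (x - r2 \<tau>)" if "ret_time r2 x t = \<tau>"
      using theI'[OF unique] that unfolding ret_time_def by simp
    show "ret_time r2 x t = \<tau>" if "\<tau> \<le> t \<and> \<tau> = t - norm (x - r2 \<tau>)"
      unfolding ret_time_def using the1_equality[OF unique that] .
  qed
qed

lemma ret_time_on_light_cone:
  assumes "admissible r2"
  shows "ret_time r2 x (s + norm (x - r2 s)) = s"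
  using ret_time_iff[OF assms] by simp

lemma retT_eq_distance:
  assumes "admissible r2"
  shows "retT r2 x t = norm (x - r2 (ret_time r2 x t))"
  using ret_time_iff[OF assms, of x t "ret_time r2 x t"] by (simp add: retT_def)

lemma field_e_unit:
  assumes "admissible r2" and "retT r2 x t > 0"
  shows "norm (field_e r2 x t) = 1"
  using assms retT_eq_distance[OF assms(1), of x t] by (simp add: field_e_def field_u_def)

lemma field_e_sgn:
  assumes "admissible r2" and "retT r2 x t > 0"
  shows "sgn (x - r2 (ret_time r2 x t)) = field_e r2 x t"
  using assms retT_eq_distance[OF assms(1), of x t]
  by (simp add: field_e_def field_u_def sgn_div_norm divide_inverse)

(* Since |e| = 1 and |v| < 1 the Doppler factor z = 1/(1 - e.v) is well defined and positive. *)
lemma e_dot_v_less_one: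
  assumes "admissible r2" and "retT r2 x t > 0"
  shows "field_e r2 x t \<bullet> field_v r2 x t < 1"
proof -
  have "field_e r2 x t \<bullet> field_v r2 x t \<le> norm (field_v r2 x t)"
    using Cauchy_Schwarz_ineq2[of "field_e r2 x t" "field_v r2 x t"] field_e_unit[OF assms]
    by simp
  also have "\<dots> < 1"
    unfolding field_v_def by (rule admissible_velocity(2)[OF assms(1)])
  finally show ?thesis .
qed

lemma distance_to_trajectory_has_derivative:
  fixes r2 :: "real \<Rightarrow> 'a::real_inner"
  assumes der: "(r2 has_vector_derivative w) (at \<tau>)" and "x - r2 \<tau> \<noteq> 0"
  shows "((\<lambda>p. norm (fst p - r2 (snd p))) has_derivative
           (\<lambda>h. (fst h - snd h *\<^sub>R w) \<bullet> sgn (x - r2 \<tau>))) (at (x, \<tau>))"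
proof -
  have "(r2 has_derivative (\<lambda>s. s *\<^sub>R w)) (at (snd (x, \<tau>)))"
    using der by (simp add: has_vector_derivative_def)
  from has_derivative_compose[OF has_derivative_snd[OF has_derivative_ident] this]
  have "((\<lambda>p. r2 (snd p)) has_derivative (\<lambda>h. snd h *\<^sub>R w)) (at (x, \<tau>))"
    by (simp add: o_def)
  then have "((\<lambda>p. fst p - r2 (snd p)) has_derivative (\<lambda>h. fst h - snd h *\<^sub>R w)) (at (x, \<tau>))"
    by (intro derivative_intros)
  with has_derivative_compose[OF this, of norm "\<lambda>h. h \<bullet> sgn (x - r2 \<tau>)"]
    has_derivative_norm[OF \<open>x - r2 \<tau> \<noteq> 0\<close>]
  show ?thesis by (simp add: o_def)
qed

(* The map K (x, tau) = (x, tau + |x - r2 tau|) is continuous,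
   inverted by g (x, t) = (x, tau(x, t)), and differentiable with invertible derivative K'
   (inverse g'); the inverse function theorem transfers differentiability to g. *)
lemma ret_time_has_derivative:
  assumes adm: "admissible r2" and G: "retT r2 x t > 0"
  defines "e \<equiv> field_e r2 x t" and "v \<equiv> field_v r2 x t" and "z \<equiv> field_z r2 x t"
  shows "((\<lambda>p. ret_time r2 (fst p) (snd p)) has_derivative
           (\<lambda>h. z * (snd h - e \<bullet> fst h))) (at (x, t))"
proof -
  define \<tau> where "\<tau> = ret_time r2 x t"
  define K where "K = (\<lambda>p::(real^3) \<times> real. (fst p, snd p + norm (fst p - r2 (snd p))))"
  define K' where "K' = (\<lambda>h::(real^3) \<times> real. (fst h, snd h + (fst h - snd h *\<^sub>R v) \<bullet> e))"
  define g where "g = (\<lambda>p::(real^3) \<times> real. (fst p, ret_time r2 (fst p) (snd p)))"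
  define g' where "g' = (\<lambda>h::(real^3) \<times> real. (fst h, z * (snd h - e \<bullet> fst h)))"
  have der: "(r2 has_vector_derivative vector_derivative r2 (at s)) (at s)" for s
    using admissible_velocity(1)[OF adm] .
  have "continuous_on UNIV r2"
    using has_vector_derivative_continuous[OF der] by (simp add: continuous_at_imp_continuous_on)
  then have "continuous_on UNIV (\<lambda>p::(real^3) \<times> real. r2 (snd p))"
    using continuous_on_compose2[OF _ continuous_on_snd[OF continuous_on_id]] by blast
  then have "continuous_on UNIV K"
    unfolding K_def by (intro continuous_intros)
  moreover have "g (K p) = p" for p
    by (simp add: g_def K_def ret_time_on_light_cone[OF adm])
  moreover have "K (x, \<tau>) = (x, t)"
    using retT_eq_distance[OF adm, of x t] by (simp add: K_def \<tau>_def retT_def)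
  moreover have "(K has_derivative K') (at (x, \<tau>))"
  proof -
    have nonzero: "x - r2 \<tau> \<noteq> 0" and direction: "sgn (x - r2 \<tau>) = e"
      using G retT_eq_distance[OF adm, of x t] field_e_sgn[OF adm G]
      by (auto simp: \<tau>_def e_def)
    from distance_to_trajectory_has_derivative[OF der[of \<tau>] nonzero, unfolded direction]
    have "((\<lambda>p. norm (fst p - r2 (snd p))) has_derivative (\<lambda>h. (fst h - snd h *\<^sub>R v) \<bullet> e))
        (at (x, \<tau>))" by (simp add: v_def field_v_def \<tau>_def)
    then show ?thesis unfolding K_def K'_def by (intro derivative_intros) auto
  qed
  moreover have "K' \<circ> g' = id"
  proof
    fix h :: "(real^3) \<times> real"
    have "e \<bullet> v < 1"
      using e_dot_v_less_one[OF adm G] by (simp add: e_def v_def)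
    then have z_inverse: "z * (1 - e \<bullet> v) = 1"
      by (simp add: z_def field_z_def e_def v_def)
    have "z * (snd h - e \<bullet> fst h) + (fst h - (z * (snd h - e \<bullet> fst h)) *\<^sub>R v) \<bullet> e
        = (snd h - e \<bullet> fst h) * (z * (1 - e \<bullet> v)) + e \<bullet> fst h"
      by (simp add: inner_diff_left inner_commute algebra_simps)
    also have "\<dots> = snd h"
      using z_inverse by simp
    finally have "z * (snd h - e \<bullet> fst h) + (fst h - (z * (snd h - e \<bullet> fst h)) *\<^sub>R v) \<bullet> e = snd h" .
    then show "(K' \<circ> g') h = id h"
      by (simp add: K'_def g'_def)
  qed
  ultimately have "(g has_derivative g') (at (x, t))"
    using has_derivative_inverse_strong[OF open_UNIV UNIV_I, where f=K and g=g and x="(x, \<tau>)"] by simp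
  from has_derivative_snd[OF this] show ?thesis
    by (simp add: g_def g'_def)
qed

lemma retT_has_derivative:
  assumes adm: "admissible r2" and G: "retT r2 x t > 0"
  defines "dtau \<equiv> \<lambda>h. field_z r2 x t * (snd h - field_e r2 x t \<bullet> fst h)"
  shows "((\<lambda>p. retT r2 (fst p) (snd p)) has_derivative (\<lambda>h. snd h - dtau h)) (at (x, t))"
  unfolding retT_def dtau_def
  by (intro derivative_intros ret_time_has_derivative[OF adm G])

(* Differentiating e = (1/T) (x - r2 tau) with r2' tau = v and x - r2 tau = T e gives
   de = u (dx - d tau v - dT e). *)
lemma field_e_has_derivative:
  assumes adm: "admissible r2" and G: "retT r2 x t > 0"
  defines "e \<equiv> field_e r2 x t" and "v \<equiv> field_v r2 x t" and "u \<equiv> field_u r2 x t"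
    and "dtau \<equiv> \<lambda>h. field_z r2 x t * (snd h - field_e r2 x t \<bullet> fst h)"
  shows "((\<lambda>p. field_e r2 (fst p) (snd p)) has_derivative
           (\<lambda>h. u *\<^sub>R (fst h - dtau h *\<^sub>R v - (snd h - dtau h) *\<^sub>R e))) (at (x, t))"
proof -
  define \<tau> where "\<tau> = ret_time r2 x t"
  define T where "T = retT r2 x t"
  have dtau: "((\<lambda>p. ret_time r2 (fst p) (snd p)) has_derivative dtau) (at (x, t))"
    using ret_time_has_derivative[OF adm G] by (simp add: dtau_def)
  have "(r2 has_derivative (\<lambda>s. s *\<^sub>R v)) (at (ret_time r2 (fst (x, t)) (snd (x, t))))"
    using admissible_velocity(1)[OF adm, of \<tau>]
    by (simp add: has_vector_derivative_def v_def field_v_def \<tau>_def)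
  from has_derivative_compose[OF dtau this]
  have "((\<lambda>p. fst p - r2 (ret_time r2 (fst p) (snd p))) has_derivative
      (\<lambda>h. fst h - dtau h *\<^sub>R v)) (at (x, t))"
    by (intro derivative_intros) (simp add: o_def)
  moreover have "((\<lambda>p. inverse (retT r2 (fst p) (snd p))) has_derivative
      (\<lambda>h. - (u * (snd h - dtau h) * u))) (at (x, t))"
    using Deriv.has_derivative_inverse[OF _ retT_has_derivative[OF adm G]] G
    by (simp add: u_def field_u_def dtau_def inverse_eq_divide)
  ultimately have deriv: "((\<lambda>p. inverse (retT r2 (fst p) (snd p)) *\<^sub>R
      (fst p - r2 (ret_time r2 (fst p) (snd p)))) has_derivative
      (\<lambda>h. u *\<^sub>R (fst h - dtau h *\<^sub>R v) - (u * (snd h - dtau h) * u) *\<^sub>R (x - r2 \<tau>)))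
      (at (x, t))"
    by (intro has_derivative_eq_rhs[OF has_derivative_scaleR])
      (auto simp: u_def field_u_def inverse_eq_divide \<tau>_def)
  have "(u * s * u) *\<^sub>R (x - r2 \<tau>) = (u * s) *\<^sub>R e" for s
  proof -
    have "x - r2 \<tau> = T *\<^sub>R e" and "u * T = 1"
      using G by (simp_all add: e_def field_e_def u_def field_u_def T_def \<tau>_def)
    then show ?thesis by (simp add: mult.assoc)
  qed
  then have derivative_eq:
    "(\<lambda>h. u *\<^sub>R (fst h - dtau h *\<^sub>R v) - (u * (snd h - dtau h) * u) *\<^sub>R (x - r2 \<tau>))
      = (\<lambda>h. u *\<^sub>R (fst h - dtau h *\<^sub>R v - (snd h - dtau h) *\<^sub>R e))"
    by (simp only:) (simp add: scaleR_diff_right)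
  have "(\<lambda>p. field_e r2 (fst p) (snd p)) =
      (\<lambda>p. inverse (retT r2 (fst p) (snd p)) *\<^sub>R (fst p - r2 (ret_time r2 (fst p) (snd p))))"
    by (simp add: fun_eq_iff field_e_def field_u_def inverse_eq_divide)
  then show ?thesis
    using deriv unfolding derivative_eq by simp
qed

lemma vec4_nth [simp]:
  "vec4 a b c d $ 1 = a" "vec4 a b c d $ 2 = b" "vec4 a b c d $ 3 = c" "vec4 a b c d $ 4 = d"
  by (simp_all add: vec4_def)

lemma vec4_as_axis_sum:
  "vec4 a b c d = a *\<^sub>R axis 1 1 + b *\<^sub>R axis 2 1 + c *\<^sub>R axis 3 1 + d *\<^sub>R axis 4 1"
  by (simp add: vec_eq_iff forall_4 axis_def vec4_def)

lemma has_derivative_vec4: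
  assumes "(f1 has_derivative f1') F" "(f2 has_derivative f2') F"
    and "(f3 has_derivative f3') F" "(f4 has_derivative f4') F"
  shows "((\<lambda>x. vec4 (f1 x) (f2 x) (f3 x) (f4 x)) has_derivative
           (\<lambda>h. vec4 (f1' h) (f2' h) (f3' h) (f4' h))) F"
  unfolding vec4_as_axis_sum
  by (intro has_derivative_add bounded_linear.has_derivative[OF bounded_linear_scaleR_left] assms)

lemma has_derivative_spacetime_coords:
  assumes "((\<lambda>p. f (fst p) (snd p)) has_derivative f') (at (x, t))"
  shows "((\<lambda>p. f (space_part p) (time_part p)) has_derivative
           (\<lambda>h. f' (space_part h, time_part h))) (at (vec4 t (x$1) (x$2) (x$3)))"
proof -
  have "linear space_part"
    by (rule linearI) (simp_all add: vec_eq_iff space_part_def)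
  moreover have "linear time_part"
    by (rule linearI) (simp_all add: time_part_def)
  ultimately have "bounded_linear (\<lambda>p. (space_part p, time_part p))"
    by (intro bounded_linear_Pair) (simp_all add: linear_conv_bounded_linear)
  moreover have "(space_part (vec4 t (x$1) (x$2) (x$3)), time_part (vec4 t (x$1) (x$2) (x$3))) = (x, t)"
    by (simp add: vec_eq_iff forall_3 space_part_def time_part_def)
  moreover note assms
  ultimately have "((\<lambda>p. f (fst p) (snd p)) has_derivative f')
      (at ((\<lambda>p. (space_part p, time_part p)) (vec4 t (x$1) (x$2) (x$3))))"
    by simp
  from has_derivative_compose[OF bounded_linear_imp_has_derivative[OF \<open>bounded_linear _\<close>] this]
  show ?thesis by simp
qed

lemma PhiMap_has_derivative:
  assumes adm: "admissible r2" and G: "retT r2 x t > 0"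
  defines "e \<equiv> field_e r2 x t" and "v \<equiv> field_v r2 x t"
    and "u \<equiv> field_u r2 x t" and "z \<equiv> field_z r2 x t"
  defines "dtau \<equiv> \<lambda>h::real^4. z * (time_part h - e \<bullet> space_part h)"
  defines "de \<equiv> \<lambda>h::real^4. u *\<^sub>R (space_part h - dtau h *\<^sub>R v - (time_part h - dtau h) *\<^sub>R e)"
  shows "(PhiMap r2 has_derivative
           (\<lambda>h. vec4 (dtau h) (time_part h - dtau h) (de h $ 1) (de h $ 2)))
           (at (vec4 t (x$1) (x$2) (x$3)))"
proof -
  let ?q = "vec4 t (x$1) (x$2) (x$3)"
  have e_components:
    "((\<lambda>p. field_e r2 (space_part p) (time_part p) $ k) has_derivative (\<lambda>h. de h $ k)) (at ?q)" for k
    using has_derivative_spacetime_coords[OF bounded_linear.has_derivative[OF bounded_linear_vec_nth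
        field_e_has_derivative[OF adm G]]]
    by (simp add: de_def dtau_def e_def v_def u_def z_def)
  have Phi_eq: "PhiMap r2 = (\<lambda>p. vec4 (ret_time r2 (space_part p) (time_part p))
      (retT r2 (space_part p) (time_part p))
      (field_e r2 (space_part p) (time_part p) $ 1) (field_e r2 (space_part p) (time_part p) $ 2))"
    by (simp add: fun_eq_iff PhiMap_def Let_def)
  have ret_time_derivative:
    "((\<lambda>p. ret_time r2 (space_part p) (time_part p)) has_derivative dtau) (at ?q)"
    using has_derivative_spacetime_coords[of "ret_time r2",
        OF ret_time_has_derivative[OF adm G]]
    by (simp add: dtau_def e_def z_def)
  have retT_derivative: "((\<lambda>p. retT r2 (space_part p) (time_part p)) has_derivative
      (\<lambda>h. time_part h - dtau h)) (at ?q)"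
    using has_derivative_spacetime_coords[of "retT r2",
        OF retT_has_derivative[OF adm G]]
    by (simp add: dtau_def e_def z_def)
  show ?thesis
    unfolding Phi_eq
    by (intro has_derivative_vec4 ret_time_derivative retT_derivative e_components)
qed

lemma det_4:
  "det (A::'a::comm_ring_1^4^4) = A$1$1 * A$2$2 * A$3$3 * A$4$4 - A$1$1 * A$2$2 * A$3$4 * A$4$3 - A$1$1 * A$2$3 * A$3$2 * A$4$4 + A$1$1 * A$2$3 * A$3$4 * A$4$2 + A$1$1 * A$2$4 * A$3$2 * A$4$3 - A$1$1 * A$2$4 * A$3$3 * A$4$2 - A$1$2 * A$2$1 * A$3$3 * A$4$4 + A$1$2 * A$2$1 * A$3$4 * A$4$3 + A$1$2 * A$2$3 * A$3$1 * A$4$4 - A$1$2 * A$2$3 * A$3$4 * A$4$1 - A$1$2 * A$2$4 * A$3$1 * A$4$3 + A$1$2 * A$2$4 * A$3$3 * A$4$1 + A$1$3 * A$2$1 * A$3$2 * A$4$4 - A$1$3 * A$2$1 * A$3$4 * A$4$2 - A$1$3 * A$2$2 * A$3$1 * A$4$4 + A$1$3 * A$2$2 * A$3$4 * A$4$1 + A$1$3 * A$2$4 * A$3$1 * A$4$2 - A$1$3 * A$2$4 * A$3$2 * A$4$1 - A$1$4 * A$2$1 * A$3$2 * A$4$3 + A$1$4 * A$2$1 * A$3$3 * A$4$2 + A$1$4 * A$2$2 * A$3$1 * A$4$3 - A$1$4 * A$2$2 * A$3$3 * A$4$1 - A$1$4 * A$2$3 * A$3$1 * A$4$2 + A$1$4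 * A$2$3 * A$3$2 * A$4$1"
proof -
  have f1: "finite {2::4, 3, 4}" "1 \<notin> {2::4, 3, 4}" by auto
  have f2: "finite {3::4, 4}" "2 \<notin> {3::4, 4}" by auto
  have f3: "finite {4::4}" "3 \<notin> {4::4}" by auto
  show ?thesis
    unfolding det_def UNIV_4
    unfolding sum_over_permutations_insert[OF f1]
    unfolding sum_over_permutations_insert[OF f2]
    unfolding sum_over_permutations_insert[OF f3]
    unfolding permutes_sing
    by (simp add: sign_swap_id permutation_swap_id sign_compose permutation_compose swap_id_eq algebra_simps)
qed

(* The purely algebraic heart of the theorem: for any z, u, e, v the Jacobian matrix built
   from d tau, dT, de1, de2 has determinant z u^2 e3 (the velocity v drops out). *)
lemma det_retarded_jacobian:
  fixes e v :: "real^3" and z u :: real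
  defines "dtau \<equiv> \<lambda>h::real^4. z * (time_part h - e \<bullet> space_part h)"
  defines "de \<equiv> \<lambda>h::real^4. u *\<^sub>R (space_part h - dtau h *\<^sub>R v - (time_part h - dtau h) *\<^sub>R e)"
  shows "det (matrix (\<lambda>h. vec4 (dtau h) (time_part h - dtau h) (de h $ 1) (de h $ 2)))
    = z * u\<^sup>2 * e $ 3"
  by (simp add: det_4 matrix_def dtau_def de_def axis_def inner_vec_def sum_3 space_part_def
      time_part_def algebra_simps power2_eq_square)

theorem mainTheorem6:
  fixes r2 :: "real \<Rightarrow> real^3" and r1 :: "real^3" and t :: real
  assumes "admissible r2"
    and "(r1, t) \<in> regionG r2"
  shows "PhiMap r2 differentiable (at (vec4 t (r1$1) (r1$2) (r1$3)))
    \<and> det (jacobian (PhiMap r2) (at (vec4 t (r1$1) (r1$2) (r1$3))))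
        = field_z r2 r1 t * (field_u r2 r1 t)^2 * (field_e r2 r1 t $ 3)"
proof -
  have "retT r2 r1 t > 0"
    using assms(2) by (simp add: regionG_def)
  then obtain D where "(PhiMap r2 has_derivative D) (at (vec4 t (r1$1) (r1$2) (r1$3)))"
    and "det (matrix D) = field_z r2 r1 t * (field_u r2 r1 t)^2 * (field_e r2 r1 t $ 3)"
    using PhiMap_has_derivative[OF assms(1)] det_retarded_jacobian by blast
  then show ?thesis
    unfolding jacobian_def by (auto simp: differentiableI frechet_derivative_at[symmetric])
qed

end
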